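(* Let $G$ be a connected nontrivial graph with $m$ vertices and let $n\geq3$. Then $$\lambda'(G\boxtimes C_n)=\min\{3n\lambda(G),\ 2(m+2e(G)),\ 6\delta(G)+2\}.$$
   Context: All graphs are finite, simple and undirected; "nontrivial" means having at least two vertices. $C_n$ denotes the cycle on $n$ vertices. For a graph $G$: $e(G)=|E(G)|$; $\delta(G)$ is the minimum degree; $\lambda(G)$ is the edge-connectivity. A restricted edge-cut of a connected graph $G$ is a set $S\subseteq E(G)$ such that $G-S$ is disconnected and every component of $G-S$ has at least $2$ vertices; the restricted edge-connectivity $\lambda'(G)$ is the minimum cardinality of a restricted edge-cut. The strong product $G\boxtimes H$ has vertex set $V(G)\times V(H)$, with $(x_1,y_1)$ and $(x_2,y_2)$ adjacent iff either $x_1=x_2$ and $y_1y_2\in E(H)$, or $y_1=y_2$ and $x_1x_2\in E(G)$, or $x_1x_2\in E(G)$ and $y_1y_2\in E(H)$. *)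

theory Defs
  imports Main
begin

definition graph :: "'a set \<Rightarrow> 'a set set \<Rightarrow> bool" where
  "graph V E \<longleftrightarrow> finite V \<and>
     (\<forall>e\<in>E. \<exists>x y. x \<in> V \<and> y \<in> V \<and> x \<noteq> y \<and> e = {x, y})"

definition edge_rel :: "'a set set \<Rightarrow> ('a \<times> 'a) set" where
  "edge_rel E = {(u, v). {u, v} \<in> E}"

definition reachable :: "'a set set \<Rightarrow> 'a \<Rightarrow> 'a \<Rightarrow> bool" where
  "reachable E u v \<longleftrightarrow> (u, v) \<in> (edge_rel E)\<^sup>*"

definition connected :: "'a set \<Rightarrow> 'a set set \<Rightarrow> bool" where
  "connected V E \<longleftrightarrow> V \<noteq> {} \<and> (\<forall>u\<in>V. \<forall>v\<in>V. reachable E u v)"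

definition degree :: "'a set set \<Rightarrow> 'a \<Rightarrow> nat" where
  "degree E v = card {e \<in> E. v \<in> e}"

definition min_degree :: "'a set \<Rightarrow> 'a set set \<Rightarrow> nat" where
  "min_degree V E = Min (degree E ` V)"

definition edge_cut :: "'a set \<Rightarrow> 'a set set \<Rightarrow> 'a set set \<Rightarrow> bool" where
  "edge_cut V E S \<longleftrightarrow> S \<subseteq> E \<and> \<not> connected V (E - S)"

definition edge_conn :: "'a set \<Rightarrow> 'a set set \<Rightarrow> nat" where
  "edge_conn V E = Min {card S | S. edge_cut V E S}"

text \<open>Restricted edge-cut: G - S disconnected and every component of G - S
  has at least two vertices.\<close>
definition restricted_edge_cut :: "'a set \<Rightarrow> 'a set set \<Rightarrow> 'a set set \<Rightarrow> bool" where
  "restricted_edge_cut V E S \<longleftrightarrow> S \<subseteq> E \<and> \<not> connected V (E - S) \<and>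
     (\<forall>u\<in>V. \<exists>v\<in>V. v \<noteq> u \<and> reachable (E - S) u v)"

definition restricted_edge_conn :: "'a set \<Rightarrow> 'a set set \<Rightarrow> nat" where
  "restricted_edge_conn V E = Min {card S | S. restricted_edge_cut V E S}"

definition sp_verts :: "'a set \<Rightarrow> 'b set \<Rightarrow> ('a \<times> 'b) set" where
  "sp_verts V1 V2 = V1 \<times> V2"

definition sp_edges :: "'a set \<Rightarrow> 'a set set \<Rightarrow> 'b set \<Rightarrow> 'b set set \<Rightarrow> ('a \<times> 'b) set set" where
  "sp_edges V1 E1 V2 E2 = {{(x1, y1), (x2, y2)} | x1 y1 x2 y2.
      x1 \<in> V1 \<and> x2 \<in> V1 \<and> y1 \<in> V2 \<and> y2 \<in> V2 \<and>
      ((x1 = x2 \<and> {y1, y2} \<in> E2) \<or> (y1 = y2 \<and> {x1, x2} \<in> E1) \<or>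
       ({x1, x2} \<in> E1 \<and> {y1, y2} \<in> E2))}"

definition cycle_verts :: "nat \<Rightarrow> nat set" where
  "cycle_verts n = {0..<n}"

definition cycle_edges :: "nat \<Rightarrow> nat set set" where
  "cycle_edges n = {{i, (i + 1) mod n} | i. i < n}"

end

theory Submission
  imports Defs
begin

text \<open>
  Every restricted edge-cut of \<open>G \<boxtimes> C\<^sub>n\<close> contains the edge boundary of a vertex set \<open>X\<close> such that
  every vertex has a neighbour on its own side of \<open>X\<close>. Call a vertex \<open>x\<close> of \<open>G\<close> split if \<open>X\<close>
  contains some but not all of the fibre \<open>{x} \<times> C\<^sub>n\<close>. Going around the cycle, a split fibre
  changes sides an even, hence at least two, number of times; this gives two cut edges inside the
  fibre and, for an edge \<open>xy\<close> of \<open>G\<close>, at least three cut edges over \<open>xy\<close> (four if \<open>y\<close> is split too).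
  If no vertex is split, \<open>X\<close> is a union of fibres over some \<open>T \<subseteq> V\<close>, and each of the at least
  \<open>\<lambda>(G)\<close> edges of \<open>G\<close> leaving \<open>T\<close> lifts to \<open>3n\<close> cut edges. If two vertices are split, the
  cut edges at them already number \<open>6\<delta>(G) + 2\<close>. If exactly one vertex \<open>x\<close> is split, weighing
  the edges at \<open>x\<close> by the numbers of fibre vertices of \<open>x\<close> on either side gives one of the two
  bounds; when only one fibre vertex lies on one side, restrictedness provides it a neighbour there.

  Both bounds are attained: by the boundary of \<open>A \<times> C\<^sub>n\<close> for a side \<open>A\<close> of a minimum edge
  cut, and by the boundary of two consecutive vertices of the fibre of a vertex of minimum degree.
  Finally \<open>6\<delta>(G) + 2 \<le> 2(m + 2e(G))\<close> always holds, so the middle term of the minimum is redundant.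
\<close>

section \<open>Binary sequences on a cycle\<close>

lemma Suc_mod_neq_self:
  assumes "1 < n" shows "Suc i mod n \<noteq> i"
proof (cases "Suc i < n")
  case False
  show ?thesis
  proof (cases "Suc i = n")
    case False
    have "Suc i mod n < n" using assms by simp
    then show ?thesis using \<open>\<not> Suc i < n\<close> False by linarith
  qed (use assms in auto)
qed simp

lemma Suc_Suc_mod_neq_self:
  assumes "2 < n" shows "Suc (Suc i mod n) mod n \<noteq> i"
proof (cases "i < n")
  case True
  then show ?thesis using assms by (cases "Suc i = n"; cases "Suc (Suc i) = n") auto
next
  case False
  have "Suc (Suc i mod n) mod n < n" using assms by simp
  then show ?thesis using False by linarith
qed

lemma card_shift_mod:
  assumes "0 < n"
  shows "card {i. i < n \<and> P (Suc i mod n)} = card {i. i < n \<and> P i}"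
proof -
  have inj: "inj_on (\<lambda>i. Suc i mod n) {i. i < n \<and> P (Suc i mod n)}"
  proof (rule inj_onI)
    fix i j assume "i \<in> {i. i < n \<and> P (Suc i mod n)}" "j \<in> {i. i < n \<and> P (Suc i mod n)}"
      and "Suc i mod n = Suc j mod n"
    then show "i = j" by (cases "Suc i = n"; cases "Suc j = n") auto
  qed
  have "(\<lambda>i. Suc i mod n) ` {i. i < n \<and> P (Suc i mod n)} = {i. i < n \<and> P i}"
  proof (intro equalityI subsetI)
    fix j assume j: "j \<in> {i. i < n \<and> P i}"
    define i where "i = (if j = 0 then n - 1 else j - 1)"
    have "i < n" "Suc i mod n = j" using j assms by (auto simp: i_def)
    then show "j \<in> (\<lambda>i. Suc i mod n) ` {i. i < n \<and> P (Suc i mod n)}" using j by force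
  qed (use assms in auto)
  then show ?thesis using card_image[OF inj] by simp
qed

definition switches :: "nat \<Rightarrow> (nat \<Rightarrow> bool) \<Rightarrow> nat set" where
  "switches n h = {i. i < n \<and> h i \<noteq> h (Suc i mod n)}"

definition nonconst :: "nat \<Rightarrow> (nat \<Rightarrow> bool) \<Rightarrow> bool" where
  "nonconst n h \<longleftrightarrow> (\<exists>i<n. \<exists>j<n. h i \<noteq> h j)"

lemma even_card_changes_iff:
  fixes h :: "nat \<Rightarrow> bool"
  shows "even (card {i. i < k \<and> h i \<noteq> h (Suc i)}) \<longleftrightarrow> h 0 = h k"
proof (induction k)
  case (Suc k)
  show ?case
  proof (cases "h k = h (Suc k)")
    case True
    then have "{i. i < Suc k \<and> h i \<noteq> h (Suc i)} = {i. i < k \<and> h i \<noteq> h (Suc i)}"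
      by (auto simp: less_Suc_eq)
    then show ?thesis using Suc.IH True by simp
  next
    case False
    then have "{i. i < Suc k \<and> h i \<noteq> h (Suc i)} = insert k {i. i < k \<and> h i \<noteq> h (Suc i)}"
      by (auto simp: less_Suc_eq)
    then show ?thesis using Suc.IH False by auto
  qed
qed simp

lemma even_card_switches:
  assumes "0 < n" shows "even (card (switches n h))"
proof -
  define A where "A = {i. i < n - 1 \<and> h i \<noteq> h (Suc i)}"
  have sw: "switches n h = A \<union> (if h (n - 1) = h 0 then {} else {n - 1})"
  proof (rule set_eqI)
    fix i
    consider "i < n - 1" | "i = n - 1" | "n \<le> i" using assms by linarith
    then show "i \<in> switches n h \<longleftrightarrow> i \<in> A \<union> (if h (n - 1) = h 0 then {} else {n - 1})"
      by cases (use assms in \<open>auto simp: switches_def A_def\<close>)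
  qed
  have "n - 1 \<notin> A" "finite A" by (auto simp: A_def)
  then have "card (A \<union> {n - 1}) = Suc (card A)" by simp
  then show ?thesis using sw even_card_changes_iff[of "n - 1" h, folded A_def]
    by (cases "h (n - 1) = h 0") simp_all
qed

lemma finite_switches [simp]: "finite (switches n h)"
  by (simp add: switches_def)

lemma switches_empty_imp_const:
  assumes "switches n h = {}" "i < n" shows "h i = h 0"
  using assms(2)
proof (induction i)
  case (Suc i)
  then have "i \<notin> switches n h" "Suc i mod n = Suc i" using assms(1) by auto
  then show ?case using Suc by (simp add: switches_def)
qed simp

lemma two_le_card_switches:
  assumes "nonconst n h" shows "2 \<le> card (switches n h)"
proof -
  obtain i j where "i < n" "j < n" "h i \<noteq> h j" using assms by (auto simp: nonconst_def)
  then have "switches n h \<noteq> {}" "0 < n" using switches_empty_imp_const[of n h] by auto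
  moreover have "even (card (switches n h))" using \<open>0 < n\<close> by (rule even_card_switches)
  moreover have "card (switches n h) \<noteq> 0" using \<open>switches n h \<noteq> {}\<close> by simp
  ultimately show ?thesis by (elim evenE) simp
qed

text \<open>If \<open>f\<close> and \<open>g\<close> describe a vertex set \<open>X\<close> on the fibres \<open>{u} \<times> C\<^sub>n\<close> and
  \<open>{v} \<times> C\<^sub>n\<close> of an edge \<open>uv\<close>, then \<open>mismatch n f g\<close> is the number of edges over \<open>uv\<close>
  that are cut by \<open>X\<close>.\<close>
definition mismatch :: "nat \<Rightarrow> (nat \<Rightarrow> bool) \<Rightarrow> (nat \<Rightarrow> bool) \<Rightarrow> nat" where
  "mismatch n f g =
     card {i. i < n \<and> f i \<noteq> g i} + card {i. i < n \<and> f i \<noteq> g (Suc i mod n)} +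
     card {i. i < n \<and> f (Suc i mod n) \<noteq> g i}"

lemma mismatch_const_right:
  assumes "0 < n" "\<And>i. i < n \<Longrightarrow> g i = c"
  shows "mismatch n f g = 3 * card {i. i < n \<and> f i \<noteq> c}"
proof -
  have "{i. i < n \<and> f i \<noteq> g i} = {i. i < n \<and> f i \<noteq> c}"
    "{i. i < n \<and> f i \<noteq> g (Suc i mod n)} = {i. i < n \<and> f i \<noteq> c}"
    "{i. i < n \<and> f (Suc i mod n) \<noteq> g i} = {i. i < n \<and> f (Suc i mod n) \<noteq> c}"
    using assms by auto
  then show ?thesis using card_shift_mod[OF assms(1), of "\<lambda>j. f j \<noteq> c"] by (simp add: mismatch_def)
qed

lemma mismatch_sym_diff:
  "mismatch n f g = card {i. i < n \<and> f i \<noteq> g i}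
     + card (sym_diff {i. i < n \<and> f i \<noteq> g i} (switches n g))
     + card (sym_diff {i. i < n \<and> f i \<noteq> g i} (switches n f))"
proof -
  have "{i. i < n \<and> f i \<noteq> g (Suc i mod n)} = sym_diff {i. i < n \<and> f i \<noteq> g i} (switches n g)"
    "{i. i < n \<and> f (Suc i mod n) \<noteq> g i} = sym_diff {i. i < n \<and> f i \<noteq> g i} (switches n f)"
    by (auto simp: switches_def)
  then show ?thesis by (simp add: mismatch_def)
qed

lemma switches_xor: "switches n (\<lambda>i. f i \<noteq> g i) = sym_diff (switches n f) (switches n g)"
  by (auto simp: switches_def)

lemma four_le_mismatch_complement:
  fixes f g :: "nat \<Rightarrow> bool"
  assumes n: "3 \<le> n" and f: "nonconst n f" and fg: "\<And>i. i < n \<Longrightarrow> f i \<noteq> g i"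
  shows "4 \<le> mismatch n f g"
proof -
  have D: "{i. i < n \<and> f i \<noteq> g i} = {..<n}" using fg by auto
  have fg': "f i = (\<not> g i)" if "i < n" for i using fg that by blast
  have "Suc i mod n < n" for i using n by simp
  then have S: "switches n g = switches n f" using fg' by (auto simp: switches_def)
  have "4 \<le> n + 2 * card (sym_diff {..<n} (switches n f))"
  proof (cases "sym_diff {..<n} (switches n f) = {}")
    case True
    then have "switches n f = {..<n}" by (meson Diff_eq_empty_iff Un_empty subset_antisym)
    then have "even n" using even_card_switches[of n f] n by simp
    then have "n \<noteq> 3" by presburger
    then show ?thesis using n by simp
  next
    case False
    then have "card (sym_diff {..<n} (switches n f)) \<noteq> 0" by simp
    then show ?thesis using n by linarith
  qed
  then show ?thesis unfolding mismatch_sym_diff D S by simp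
qed

lemma mem_if_card_sym_diff_singleton:
  assumes "finite S" "card (sym_diff {a} S) < card S" shows "a \<in> S"
proof (rule ccontr)
  assume "a \<notin> S"
  then have "sym_diff {a} S = insert a S" by auto
  then show False using assms \<open>a \<notin> S\<close> by simp
qed

lemma four_le_mismatch_partial:
  fixes f g :: "nat \<Rightarrow> bool"
  assumes n: "3 \<le> n" and f: "nonconst n f" and g: "nonconst n g"
    and fg: "nonconst n (\<lambda>i. f i \<noteq> g i)"
  shows "4 \<le> mismatch n f g"
proof (rule ccontr)
  define D where "D = {i. i < n \<and> f i \<noteq> g i}"
  define Sf where "Sf = switches n f"
  define Sg where "Sg = switches n g"
  assume "\<not> 4 \<le> mismatch n f g"
  \<comment> \<open>Then \<open>D\<close> is a single position, which parity forces into both \<open>Sf\<close> and \<open>Sg\<close>; but the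
    indicator of \<open>D\<close> switches there.\<close>
  then have small: "card D + card (sym_diff D Sg) + card (sym_diff D Sf) \<le> 3"
    by (simp add: mismatch_sym_diff D_def Sf_def Sg_def)
  have fin: "finite D" "finite Sf" "finite Sg" by (simp_all add: D_def Sf_def Sg_def)
  have two: "2 \<le> card Sf" "2 \<le> card Sg"
    using two_le_card_switches f g by (simp_all add: Sf_def Sg_def)
  have even: "even (card Sf)" "even (card Sg)"
    using even_card_switches n by (simp_all add: Sf_def Sg_def)
  have "2 \<le> card (sym_diff Sf Sg)"
    using two_le_card_switches[OF fg] switches_xor by (simp add: Sf_def Sg_def)
  also have "\<dots> \<le> card (sym_diff D Sf \<union> sym_diff D Sg)" using fin by (intro card_mono) auto
  also have "\<dots> \<le> card (sym_diff D Sf) + card (sym_diff D Sg)" by (rule card_Un_le)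
  finally have "card D \<le> 1" using small by linarith
  moreover have "D \<noteq> {}" using fg unfolding D_def nonconst_def by blast
  ultimately have "card D = 1" using fin by (simp add: le_Suc_eq)
  then obtain a where a: "D = {a}" by (rule card_1_singletonE)
  have "sym_diff D S \<noteq> {}" if "even (card S)" for S
  proof
    assume "sym_diff D S = {}"
    then have "S = D" by blast
    then show False using that a by simp
  qed
  then have "card (sym_diff D Sf) \<noteq> 0" "card (sym_diff D Sg) \<noteq> 0" using even fin by simp_all
  then have one: "card (sym_diff D Sf) = 1" "card (sym_diff D Sg) = 1" using small a by simp_all
  have lt: "card (sym_diff {a} Sf) < card Sf" "card (sym_diff {a} Sg) < card Sg"
    using one two unfolding a by linarith+
  have "a \<in> Sf" "a \<in> Sg"
    using mem_if_card_sym_diff_singleton[OF fin(2) lt(1)] mem_if_card_sym_diff_singleton[OF fin(3) lt(2)] .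
  then have "a \<notin> switches n (\<lambda>i. f i \<noteq> g i)" using switches_xor by (simp add: Sf_def Sg_def)
  moreover have "a < n" "f a \<noteq> g a" using a by (auto simp: D_def set_eq_iff)
  moreover have "Suc a mod n \<notin> D" using a Suc_mod_neq_self[of n a] n by auto
  then have "f (Suc a mod n) = g (Suc a mod n)" using n by (simp add: D_def)
  ultimately show False by (simp add: switches_def)
qed

lemma four_le_mismatch:
  fixes f g :: "nat \<Rightarrow> bool"
  assumes n: "3 \<le> n" and f: "nonconst n f" and g: "nonconst n g"
  shows "4 \<le> mismatch n f g"
proof -
  consider "\<And>i. i < n \<Longrightarrow> f i = g i" | "\<And>i. i < n \<Longrightarrow> f i \<noteq> g i" | "nonconst n (\<lambda>i. f i \<noteq> g i)"
    unfolding nonconst_def by blast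
  then show ?thesis
  proof cases
    case 1
    then have D: "{i. i < n \<and> f i \<noteq> g i} = {}" by auto
    have "mismatch n f g = card (switches n g) + card (switches n f)"
      unfolding mismatch_sym_diff D by simp
    then show ?thesis using two_le_card_switches[OF f] two_le_card_switches[OF g] by simp
  next
    case 2
    then show ?thesis using four_le_mismatch_complement n f by blast
  qed (use four_le_mismatch_partial n f g in blast)
qed

lemma card_shifted_diagonals:
  assumes "2 < n" "finite D" "finite A" "finite B"
  shows "card ((\<lambda>i. (i, i)) ` D \<union> (\<lambda>i. (i, Suc i mod n)) ` A \<union> (\<lambda>i. (Suc i mod n, i)) ` B)
    = card D + card A + card B"
proof -
  have ne: "i \<noteq> Suc i mod n" "i \<noteq> Suc (Suc i mod n) mod n" for i
    using Suc_mod_neq_self[of n i] Suc_Suc_mod_neq_self[of n i] assms(1) by auto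
  have "(\<lambda>i. (i, i)) ` D \<inter> (\<lambda>i. (i, Suc i mod n)) ` A = {}"
    using ne by auto
  moreover have "((\<lambda>i. (i, i)) ` D \<union> (\<lambda>i. (i, Suc i mod n)) ` A) \<inter> (\<lambda>i. (Suc i mod n, i)) ` B = {}"
    using ne by auto
  moreover have "inj_on (\<lambda>i. (i, i)) D" "inj_on (\<lambda>i. (i, Suc i mod n)) A" "inj_on (\<lambda>i. (Suc i mod n, i)) B"
    by (auto simp: inj_on_def)
  ultimately show ?thesis using assms(2-4) by (simp add: card_Un_disjoint card_image)
qed

section \<open>Finite simple graphs\<close>

lemma rtrancl_edge_rel_closed:
  assumes "(u, w) \<in> (edge_rel F)\<^sup>*" "u \<in> T" "\<And>a b. a \<in> T \<Longrightarrow> {a, b} \<in> F \<Longrightarrow> b \<in> T"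
  shows "w \<in> T"
  using assms(1)
proof (induction rule: rtrancl_induct)
  case (step y z)
  then show ?case using assms(3) by (auto simp: edge_rel_def)
qed (use assms(2) in simp)

lemma reachable_step:
  "reachable F u v \<Longrightarrow> {v, w} \<in> F \<Longrightarrow> reachable F u w"
  unfolding reachable_def edge_rel_def by (auto intro: rtrancl_into_rtrancl)

locale simple_graph =
  fixes V :: "'a set" and E :: "'a set set"
  assumes graph: "graph V E"
begin

lemma finite_vertices: "finite V"
  using graph by (simp add: graph_def)

lemma edgeE:
  assumes "e \<in> E"
  obtains x y where "x \<in> V" "y \<in> V" "x \<noteq> y" "e = {x, y}"
  using graph assms by (auto simp: graph_def)

lemma singleton_notin_edges: "{x} \<notin> E"
proof
  assume "{x} \<in> E"
  then obtain a b where ab: "a \<noteq> b" "{x} = {a, b}" by (rule edgeE)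
  then have "a \<in> {x}" "b \<in> {x}" by simp_all
  then show False using ab(1) by simp
qed

lemma edge_vertices: "{x, y} \<in> E \<Longrightarrow> x \<in> V \<and> y \<in> V"
  by (erule edgeE) (auto simp: doubleton_eq_iff)

lemma finite_edges: "finite E"
proof (rule finite_subset)
  show "E \<subseteq> Pow V" by (auto elim: edgeE)
qed (simp add: finite_vertices)

lemma edge_other_end:
  assumes "e \<in> E" "x \<in> e" obtains w where "w \<in> V" "w \<noteq> x" "e = {x, w}"
  using assms by (elim edgeE) (auto simp: insert_commute)

lemma edge_eq_doubleton: "e \<in> E \<Longrightarrow> x \<in> e \<Longrightarrow> y \<in> e \<Longrightarrow> x \<noteq> y \<Longrightarrow> e = {x, y}"
  by (erule edgeE) blast

definition boundary :: "'a set \<Rightarrow> 'a set set" where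
  "boundary T = {e \<in> E. \<exists>u\<in>T. \<exists>v\<in>V - T. e = {u, v}}"

lemma finite_boundary: "finite (boundary T)"
  using finite_edges by (simp add: boundary_def)

lemma finite_edge_cut_sizes: "finite {card S |S. edge_cut V E S}"
proof (rule finite_subset)
  show "{card S |S. edge_cut V E S} \<subseteq> card ` Pow E" by (auto simp: edge_cut_def)
qed (simp add: finite_edges)

lemma edge_conn_le_card_boundary:
  assumes "T \<subseteq> V" "u \<in> T" "v \<in> V" "v \<notin> T"
  shows "edge_conn V E \<le> card (boundary T)"
proof -
  have "\<not> reachable (E - boundary T) u v"
  proof
    assume "reachable (E - boundary T) u v"
    then have "v \<in> T"
      unfolding reachable_def
    proof (rule rtrancl_edge_rel_closed)
      fix a b assume "a \<in> T" "{a, b} \<in> E - boundary T"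
      then show "b \<in> T" using edge_vertices[of a b] by (auto simp: boundary_def)
    qed (use assms in simp)
    then show False using assms(4) by simp
  qed
  then have "edge_cut V E (boundary T)"
    using assms by (auto simp: edge_cut_def connected_def boundary_def)
  then show ?thesis
    unfolding edge_conn_def by (auto intro: Min_le finite_edge_cut_sizes)
qed

lemma min_edge_cut_boundary:
  assumes "u \<in> V" "v \<in> V" "u \<noteq> v"
  obtains A a b where "A \<subseteq> V" "a \<in> A" "b \<in> V" "b \<notin> A" "card (boundary A) \<le> edge_conn V E"
proof -
  have "\<not> reachable {} u v" using assms(3) by (simp add: reachable_def edge_rel_def)
  then have "edge_cut V E E" using assms by (auto simp: edge_cut_def connected_def)
  then have "edge_conn V E \<in> {card S |S. edge_cut V E S}"
    unfolding edge_conn_def by (intro Min_in finite_edge_cut_sizes) auto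
  then obtain S where S: "edge_cut V E S" "card S = edge_conn V E" by auto
  then obtain a b where ab: "a \<in> V" "b \<in> V" "\<not> reachable (E - S) a b"
    using assms by (auto simp: edge_cut_def connected_def)
  define A where "A = {w \<in> V. reachable (E - S) a w}"
  have "boundary A \<subseteq> S"
  proof
    fix e assume "e \<in> boundary A"
    then obtain x y where xy: "e \<in> E" "x \<in> A" "y \<in> V" "y \<notin> A" "e = {x, y}"
      by (auto simp: boundary_def)
    show "e \<in> S"
      using xy reachable_step[of "E - S" a x y] by (auto simp: A_def)
  qed
  then have "card (boundary A) \<le> edge_conn V E"
    using S card_mono[of S "boundary A"] finite_subset[OF _ finite_edges] by (auto simp: edge_cut_def)
  moreover have "a \<in> A" using ab by (simp add: A_def reachable_def)
  ultimately show thesis using that[of A a b] ab by (auto simp: A_def)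
qed

lemma min_degree_le: "x \<in> V \<Longrightarrow> min_degree V E \<le> degree E x"
  unfolding min_degree_def using finite_vertices by simp

lemma min_degree_attained:
  assumes "V \<noteq> {}" obtains x where "x \<in> V" "degree E x = min_degree V E"
proof -
  have "Min (degree E ` V) \<in> degree E ` V" using finite_vertices assms by (intro Min_in) auto
  then show thesis using that by (auto simp: min_degree_def)
qed

lemma degree_eq_card_neighbours: "degree E x = card {w. {x, w} \<in> E}"
proof -
  have inj: "inj_on (\<lambda>w. {x, w}) {w. {x, w} \<in> E}"
    by (auto simp: inj_on_def doubleton_eq_iff)
  have "(\<lambda>w. {x, w}) ` {w. {x, w} \<in> E} = {e \<in> E. x \<in> e}"
  proof (intro equalityI subsetI)
    fix e assume e: "e \<in> {e \<in> E. x \<in> e}"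
    then obtain w where "e = {x, w}" by (auto elim: edge_other_end)
    then show "e \<in> (\<lambda>w. {x, w}) ` {w. {x, w} \<in> E}" using e by auto
  qed auto
  then show ?thesis using card_image[OF inj] by (simp add: degree_def)
qed

lemma sum_degree: "(\<Sum>v\<in>V. degree E v) = 2 * card E"
proof -
  have "(\<Sum>v\<in>V. degree E v) = card (SIGMA v:V. {e \<in> E. v \<in> e})"
    using finite_vertices finite_edges by (simp add: degree_def card_SigmaI)
  also have "\<dots> = card (prod.swap ` (SIGMA v:V. {e \<in> E. v \<in> e}))"
    by (simp add: card_image)
  also have "prod.swap ` (SIGMA v:V. {e \<in> E. v \<in> e}) = (SIGMA e:E. {v \<in> V. v \<in> e})"
    by auto
  also have "card \<dots> = (\<Sum>e\<in>E. card {v \<in> V. v \<in> e})"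
    using finite_vertices finite_edges by (simp add: card_SigmaI)
  also have "\<dots> = (\<Sum>e\<in>E. 2)"
  proof (rule sum.cong)
    fix e assume "e \<in> E"
    then obtain x y where "x \<in> V" "y \<in> V" "x \<noteq> y" "e = {x, y}" by (rule edgeE)
    then have "{v \<in> V. v \<in> e} = {x, y}" by auto
    then show "card {v \<in> V. v \<in> e} = 2" using \<open>x \<noteq> y\<close> by simp
  qed simp
  finally show ?thesis by simp
qed

text \<open>From \<open>\<delta> \<le> m - 1\<close> and \<open>m \<delta> \<le> 2 e(G)\<close>.\<close>
lemma min_degree_bound:
  assumes "V \<noteq> {}" shows "6 * min_degree V E + 2 \<le> 2 * (card V + 2 * card E)"
proof -
  define d where "d = min_degree V E"
  define m where "m = card V"
  have "m * d \<le> 2 * card E"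
    using sum_bounded_below[of V d "degree E"] min_degree_le sum_degree by (simp add: d_def m_def)
  moreover have "d + 1 \<le> m"
  proof -
    obtain x where x: "x \<in> V" using assms by blast
    have "{w. {x, w} \<in> E} \<subseteq> V - {x}" using edge_vertices singleton_notin_edges by fastforce
    then have "degree E x \<le> card (V - {x})"
      unfolding degree_eq_card_neighbours by (intro card_mono) (simp_all add: finite_vertices)
    moreover have "0 < card V" using x finite_vertices card_gt_0_iff by blast
    ultimately show ?thesis using min_degree_le[OF x] x by (simp add: d_def m_def)
  qed
  ultimately have "(d + 1) * d \<le> 2 * card E" by (meson le_trans mult_le_mono1)
  then have "d * d + d \<le> 2 * card E" by (simp add: algebra_simps)
  moreover have "d \<le> d * d" by (rule le_square)
  ultimately have "6 * d + 2 \<le> 2 * (m + 2 * card E)"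
    using \<open>d + 1 \<le> m\<close> by (simp only: nat_distrib)
  then show ?thesis by (simp add: d_def m_def)
qed

end

section \<open>The strong product with a cycle\<close>

locale cycle_strong_product = simple_graph +
  fixes n :: nat
  assumes three_le_n: "3 \<le> n"
begin

abbreviation VP :: "('a \<times> nat) set" where
  "VP \<equiv> sp_verts V (cycle_verts n)"

abbreviation EP :: "('a \<times> nat) set set" where
  "EP \<equiv> sp_edges V E (cycle_verts n) (cycle_edges n)"

definition cyc_adj :: "nat \<Rightarrow> nat \<Rightarrow> bool" where
  "cyc_adj i j \<longleftrightarrow> i < n \<and> j < n \<and> (j = Suc i mod n \<or> i = Suc j mod n)"

definition prod_adj :: "'a \<times> nat \<Rightarrow> 'a \<times> nat \<Rightarrow> bool" where
  "prod_adj p q \<longleftrightarrow> (case (p, q) of ((x, i), (y, j)) \<Rightarrow>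
     x \<in> V \<and> y \<in> V \<and> i < n \<and> j < n \<and>
     (x = y \<and> cyc_adj i j \<or> {x, y} \<in> E \<and> (i = j \<or> cyc_adj i j)))"

lemma prod_adj_iff [simp]:
  "prod_adj (x, i) (y, j) \<longleftrightarrow> x \<in> V \<and> y \<in> V \<and> i < n \<and> j < n \<and>
     (x = y \<and> cyc_adj i j \<or> {x, y} \<in> E \<and> (i = j \<or> cyc_adj i j))"
  by (simp add: prod_adj_def)

lemma mem_VP [simp]: "(x, i) \<in> VP \<longleftrightarrow> x \<in> V \<and> i < n"
  by (simp add: sp_verts_def cycle_verts_def)

lemma finite_VP: "finite VP"
  using finite_vertices by (simp add: sp_verts_def cycle_verts_def)

lemma cyc_adj_sym: "cyc_adj i j \<longleftrightarrow> cyc_adj j i"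
  by (auto simp: cyc_adj_def)

lemma not_cyc_adj_self: "\<not> cyc_adj i i"
  using Suc_mod_neq_self[of n i] three_le_n by (auto simp: cyc_adj_def)

lemma cyc_adj_Suc: "i < n \<Longrightarrow> cyc_adj i (Suc i mod n)"
  using three_le_n by (simp add: cyc_adj_def)

lemma cycle_edge_iff: "{i, j} \<in> cycle_edges n \<longleftrightarrow> cyc_adj i j"
  using three_le_n by (auto simp: cycle_edges_def cyc_adj_def doubleton_eq_iff)

lemma prod_adj_sym: "prod_adj p q \<longleftrightarrow> prod_adj q p"
  using cyc_adj_sym by (cases p; cases q) (auto simp: insert_commute)

lemma prod_adj_neq: "prod_adj p q \<Longrightarrow> p \<noteq> q"
  using not_cyc_adj_self singleton_notin_edges by (cases p) auto

lemma prod_adj_VP: "prod_adj p q \<Longrightarrow> p \<in> VP \<and> q \<in> VP"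
  by (cases p; cases q) auto

lemma EP_memE:
  assumes "c \<in> EP"
  obtains x i y j where "c = {(x, i), (y, j)}" "prod_adj (x, i) (y, j)"
proof -
  from assms obtain x i y j where c: "c = {(x, i), (y, j)}" and
    "x \<in> V" "y \<in> V" "i \<in> cycle_verts n" "j \<in> cycle_verts n"
    "(x = y \<and> {i, j} \<in> cycle_edges n) \<or> (i = j \<and> {x, y} \<in> E) \<or>
     ({x, y} \<in> E \<and> {i, j} \<in> cycle_edges n)"
    unfolding sp_edges_def by blast
  then have "prod_adj (x, i) (y, j)" by (auto simp: cycle_verts_def cycle_edge_iff)
  with c show thesis by (rule that)
qed

lemma prod_edge_iff: "{p, q} \<in> EP \<longleftrightarrow> prod_adj p q"
proof
  assume "{p, q} \<in> EP"
  then obtain x i y j where "{p, q} = {(x, i), (y, j)}" and adj: "prod_adj (x, i) (y, j)"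
    by (rule EP_memE)
  then have "p = (x, i) \<and> q = (y, j) \<or> p = (y, j) \<and> q = (x, i)" by (simp add: doubleton_eq_iff)
  then show "prod_adj p q" using adj prod_adj_sym by blast
next
  assume "prod_adj p q"
  then show "{p, q} \<in> EP"
    by (cases p; cases q) (auto simp: sp_edges_def cycle_verts_def cycle_edge_iff)
qed

lemma finite_EP: "finite EP"
proof (rule finite_subset)
  show "EP \<subseteq> Pow VP" by (auto elim!: EP_memE)
qed (simp add: finite_VP)

definition cyc_nbhd :: "nat \<Rightarrow> nat set" where
  "cyc_nbhd i = {j. j = i \<or> cyc_adj i j}"

lemma card_cyc_nbhd_le: "card (cyc_nbhd i) \<le> 3"
proof -
  let ?P = "{j. j < n \<and> Suc j mod n = i}"
  have "a = b" if "a < n" "b < n" "Suc a mod n = Suc b mod n" for a b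
    using that by (cases "Suc a = n"; cases "Suc b = n") auto
  then have "card ?P \<le> Suc 0" using card_le_Suc0_iff_eq[of ?P] by auto
  have "card (cyc_nbhd i) \<le> card ({i, Suc i mod n} \<union> ?P)"
    by (intro card_mono) (auto simp: cyc_nbhd_def cyc_adj_def)
  also have "\<dots> \<le> card {i, Suc i mod n} + card ?P" by (rule card_Un_le)
  also have "card {i, Suc i mod n} \<le> 2" by (simp add: card_insert_if)
  finally show ?thesis using \<open>card ?P \<le> Suc 0\<close> by linarith
qed

lemma finite_cyc_nbhd: "finite (cyc_nbhd i)"
  by (rule finite_subset[of _ "insert i {..<n}"]) (auto simp: cyc_nbhd_def cyc_adj_def)

lemma EP_mem_atE:
  assumes "c \<in> EP" "p \<in> c"
  obtains q where "c = {p, q}" "prod_adj p q"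
proof -
  obtain a b where ab: "c = {a, b}" "prod_adj a b" using assms(1) by (rule EP_memE) auto
  then consider "p = a" | "p = b" using assms(2) by blast
  then show thesis
  proof cases
    case 2
    have "prod_adj b a" using ab(2) prod_adj_sym by blast
    then show thesis using that[of a] ab(1) 2 by (simp add: insert_commute)
  qed (use ab that in simp)
qed

lemma card_edges_at_le:
  assumes "x \<in> V" "i < n"
  shows "card {c \<in> EP. (x, i) \<in> c} \<le> 3 * degree E x + 2"
proof -
  define N where "N = {w. {x, w} \<in> E}"
  define Q where "Q = (insert x N \<times> cyc_nbhd i) - {(x, i)}"
  have "finite N"
    using finite_subset[OF _ finite_vertices, of N] edge_vertices by (auto simp: N_def)
  then have fin: "finite (insert x N \<times> cyc_nbhd i)" using finite_cyc_nbhd by simp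
  have "{c \<in> EP. (x, i) \<in> c} \<subseteq> (\<lambda>q. {(x, i), q}) ` Q"
  proof
    fix c assume "c \<in> {c \<in> EP. (x, i) \<in> c}"
    then obtain q where c: "c = {(x, i), q}" and adj: "prod_adj (x, i) q"
      by (auto elim: EP_mem_atE)
    obtain z k where q: "q = (z, k)" by fastforce
    have "q \<in> Q" using adj prod_adj_neq[OF adj] by (auto simp: q Q_def N_def cyc_nbhd_def)
    then show "c \<in> (\<lambda>q. {(x, i), q}) ` Q" using c by blast
  qed
  then have "card {c \<in> EP. (x, i) \<in> c} \<le> card ((\<lambda>q. {(x, i), q}) ` Q)"
    using fin by (intro card_mono) (simp_all add: Q_def)
  also have "\<dots> \<le> card Q"
    using fin by (intro card_image_le) (simp add: Q_def)
  also have "card Q = card (insert x N \<times> cyc_nbhd i) - 1"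
    unfolding Q_def using fin by (intro card_Diff_singleton) (simp add: cyc_nbhd_def)
  also have "\<dots> = card (insert x N) * card (cyc_nbhd i) - 1"
    by (simp add: card_cartesian_product)
  also have "\<dots> \<le> (degree E x + 1) * 3 - 1"
  proof (intro diff_le_mono mult_le_mono)
    show "card (insert x N) \<le> degree E x + 1" using \<open>finite N\<close>
      by (simp add: N_def degree_eq_card_neighbours card_insert_if)
  qed (rule card_cyc_nbhd_le)
  finally show ?thesis by simp
qed

lemma card_edges_over_le:
  assumes "u \<noteq> v" shows "card {c \<in> EP. fst ` c = {u, v}} \<le> 3 * n"
proof -
  let ?I = "SIGMA i:{..<n}. cyc_nbhd i"
  have "{c \<in> EP. fst ` c = {u, v}} \<subseteq> (\<lambda>(i, j). {(u, i), (v, j)}) ` ?I"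
  proof
    fix c assume "c \<in> {c \<in> EP. fst ` c = {u, v}}"
    then obtain y j z k where c: "c = {(y, j), (z, k)}" "prod_adj (y, j) (z, k)" "{y, z} = {u, v}"
      by (auto elim!: EP_memE)
    then consider "y = u" "z = v" | "y = v" "z = u" by (auto simp: doubleton_eq_iff)
    then show "c \<in> (\<lambda>(i, j). {(u, i), (v, j)}) ` ?I"
    proof cases
      case 1
      then have "(j, k) \<in> ?I" using c(2) by (auto simp: cyc_nbhd_def)
      then show ?thesis using c(1) 1 by force
    next
      case 2
      then have "(k, j) \<in> ?I" using c(2) cyc_adj_sym by (auto simp: cyc_nbhd_def)
      then show ?thesis using c(1) 2 by (force simp: insert_commute)
    qed
  qed
  then have "card {c \<in> EP. fst ` c = {u, v}} \<le> card ?I"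
    using finite_cyc_nbhd by (meson card_image_le card_mono finite_SigmaI finite_imageI finite_lessThan le_trans)
  also have "\<dots> = (\<Sum>i<n. card (cyc_nbhd i))" using finite_cyc_nbhd by (simp add: card_SigmaI)
  also have "\<dots> \<le> 3 * n" using sum_bounded_above[of "{..<n}" "\<lambda>i. card (cyc_nbhd i)" 3] card_cyc_nbhd_le by simp
  finally show ?thesis .
qed

definition cut :: "('a \<times> nat) set \<Rightarrow> ('a \<times> nat) set set" where
  "cut X = {c \<in> EP. \<exists>p\<in>X. \<exists>q\<in>VP - X. c = {p, q}}"

text \<open>The cut edges projecting onto \<open>s\<close>: those inside the fibre of \<open>x\<close> for \<open>s = {x}\<close>, and those
  lying over the edge \<open>uv\<close> of \<open>G\<close> for \<open>s = {u, v}\<close>.\<close>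
definition cut_over :: "('a \<times> nat) set \<Rightarrow> 'a set \<Rightarrow> ('a \<times> nat) set set" where
  "cut_over X s = {c \<in> cut X. fst ` c = s}"

abbreviation splits :: "('a \<times> nat) set \<Rightarrow> 'a \<Rightarrow> bool" where
  "splits X x \<equiv> nonconst n (\<lambda>i. (x, i) \<in> X)"

lemma finite_cut: "finite (cut X)"
  using finite_EP by (simp add: cut_def)

lemma doubleton_in_cut: "prod_adj p q \<Longrightarrow> (p \<in> X) \<noteq> (q \<in> X) \<Longrightarrow> {p, q} \<in> cut X"
  using prod_edge_iff[of p q] prod_adj_VP[of p q] by (auto simp: cut_def insert_commute)

lemma cut_Diff_VP [simp]: "cut (VP - X) = cut X"
proof -
  have VP: "p \<in> VP" "q \<in> VP" if "{p, q} \<in> EP" for p q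
    using that prod_edge_iff prod_adj_VP by blast+
  have "c \<in> cut (VP - X) \<longleftrightarrow> c \<in> cut X" for c
  proof
    assume "c \<in> cut (VP - X)"
    then obtain p q where "c \<in> EP" "p \<in> VP - X" "q \<in> X" "c = {q, p}"
      unfolding cut_def by (auto simp: insert_commute)
    then show "c \<in> cut X" unfolding cut_def by blast
  next
    assume "c \<in> cut X"
    then obtain p q where "c \<in> EP" "p \<in> X" "q \<in> VP - X" "c = {q, p}"
      unfolding cut_def by (auto simp: insert_commute)
    then show "c \<in> cut (VP - X)" using VP unfolding cut_def by blast
  qed
  then show ?thesis by blast
qed

lemma sum_card_cut_over_le:
  assumes "finite S" shows "(\<Sum>s\<in>S. card (cut_over X s)) \<le> card (cut X)"
proof -
  have "(\<Sum>s\<in>S. card (cut_over X s)) = card (\<Union>s\<in>S. cut_over X s)"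
    using assms finite_cut by (intro card_UN_disjoint[symmetric]) (auto simp: cut_over_def)
  also have "\<dots> \<le> card (cut X)"
    using finite_cut by (intro card_mono) (auto simp: cut_over_def)
  finally show ?thesis .
qed

lemma card_switches_le_cut_over_vertex:
  assumes "x \<in> V" shows "card (switches n (\<lambda>i. (x, i) \<in> X)) \<le> card (cut_over X {x})"
proof -
  let ?g = "\<lambda>i. {(x, i), (x, Suc i mod n)}"
  have "i \<noteq> Suc (Suc i mod n) mod n" for i
    using Suc_Suc_mod_neq_self[of n i] three_le_n by simp
  then have "inj_on ?g (switches n (\<lambda>i. (x, i) \<in> X))"
    by (auto simp: inj_on_def switches_def doubleton_eq_iff)
  then have "card (switches n (\<lambda>i. (x, i) \<in> X)) = card (?g ` switches n (\<lambda>i. (x, i) \<in> X))"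
    by (simp add: card_image)
  also have "\<dots> \<le> card (cut_over X {x})"
  proof (rule card_mono)
    show "finite (cut_over X {x})" using finite_cut by (simp add: cut_over_def)
    show "?g ` switches n (\<lambda>i. (x, i) \<in> X) \<subseteq> cut_over X {x}"
      using assms cyc_adj_Suc by (auto simp: switches_def cut_over_def intro!: doubleton_in_cut)
  qed
  finally show ?thesis .
qed

lemma two_le_cut_over_vertex: "x \<in> V \<Longrightarrow> splits X x \<Longrightarrow> 2 \<le> card (cut_over X {x})"
  using two_le_card_switches card_switches_le_cut_over_vertex order_trans by blast

lemma mismatch_le_cut_over_edge:
  assumes "{u, v} \<in> E"
  shows "mismatch n (\<lambda>i. (u, i) \<in> X) (\<lambda>i. (v, i) \<in> X) \<le> card (cut_over X {u, v})"
proof -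
  have uv: "u \<noteq> v" "u \<in> V" "v \<in> V" using assms singleton_notin_edges edge_vertices by auto
  define D where "D = {i. i < n \<and> ((u, i) \<in> X) \<noteq> ((v, i) \<in> X)}"
  define A where "A = {i. i < n \<and> ((u, i) \<in> X) \<noteq> ((v, Suc i mod n) \<in> X)}"
  define B where "B = {i. i < n \<and> ((u, Suc i mod n) \<in> X) \<noteq> ((v, i) \<in> X)}"
  define P where "P = (\<lambda>i. (i, i)) ` D \<union> (\<lambda>i. (i, Suc i mod n)) ` A \<union> (\<lambda>i. (Suc i mod n, i)) ` B"
  have "mismatch n (\<lambda>i. (u, i) \<in> X) (\<lambda>i. (v, i) \<in> X) = card P"
    using card_shifted_diagonals[of n D A B] three_le_n
    by (simp add: P_def D_def A_def B_def mismatch_def)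
  also have "\<dots> = card ((\<lambda>(i, j). {(u, i), (v, j)}) ` P)"
    using uv(1) by (intro card_image[symmetric]) (auto simp: inj_on_def doubleton_eq_iff)
  also have "\<dots> \<le> card (cut_over X {u, v})"
  proof (intro card_mono)
    show "(\<lambda>(i, j). {(u, i), (v, j)}) ` P \<subseteq> cut_over X {u, v}"
    proof (intro subsetI, elim imageE)
      fix c ij assume c: "c = (\<lambda>(i, j). {(u, i), (v, j)}) ij" and "ij \<in> P"
      then obtain i j where ij: "ij = (i, j)" "i < n" "j < n" "i = j \<or> cyc_adj i j"
        "((u, i) \<in> X) \<noteq> ((v, j) \<in> X)"
        using three_le_n by (auto simp: P_def D_def A_def B_def cyc_adj_def)
      then have "{(u, i), (v, j)} \<in> cut X" using uv assms by (intro doubleton_in_cut) auto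
      then show "c \<in> cut_over X {u, v}" using c ij(1) by (simp add: cut_over_def)
    qed
  qed (use finite_cut in \<open>simp add: cut_over_def\<close>)
  finally show ?thesis .
qed

lemma cut_over_edge_const:
  assumes "{u, v} \<in> E" "\<And>i. i < n \<Longrightarrow> ((v, i) \<in> X) = c"
  shows "3 * card {i. i < n \<and> ((u, i) \<in> X) \<noteq> c} \<le> card (cut_over X {u, v})"
  using mismatch_le_cut_over_edge[OF assms(1), of X] mismatch_const_right[of n _ c] assms(2) three_le_n
  by simp

lemma cut_over_edge_full:
  assumes "{u, v} \<in> E" "\<And>i. i < n \<Longrightarrow> (v, i) \<in> X"
  shows "3 * card {i. i < n \<and> (u, i) \<notin> X} \<le> card (cut_over X {u, v})"
  using cut_over_edge_const[OF assms(1), of X True] assms(2) by simp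

lemma cut_over_edge_empty:
  assumes "{u, v} \<in> E" "\<And>i. i < n \<Longrightarrow> (v, i) \<notin> X"
  shows "3 * card {i. i < n \<and> (u, i) \<in> X} \<le> card (cut_over X {u, v})"
  using cut_over_edge_const[OF assms(1), of X False] assms(2) by simp

lemma not_splits_const:
  assumes "\<not> splits X x" "i < n" shows "((x, i) \<in> X) = ((x, 0) \<in> X)"
proof -
  have "0 < n" using three_le_n by simp
  then show ?thesis using assms unfolding nonconst_def by blast
qed

lemma card_fibre_in_out:
  "card {i. i < n \<and> (x, i) \<in> X} + card {i. i < n \<and> (x, i) \<notin> X} = n"
proof -
  have "card {i. i < n \<and> (x, i) \<in> X} + card {i. i < n \<and> (x, i) \<notin> X}
      = card ({i. i < n \<and> (x, i) \<in> X} \<union> {i. i < n \<and> (x, i) \<notin> X})"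
    by (rule card_Un_disjoint[symmetric]) auto
  also have "{i. i < n \<and> (x, i) \<in> X} \<union> {i. i < n \<and> (x, i) \<notin> X} = {..<n}" by blast
  finally show ?thesis by simp
qed

lemma three_le_cut_over_edge:
  assumes "e \<in> E" "x \<in> e" "splits X x"
  shows "3 \<le> card (cut_over X e)"
proof -
  obtain w where w: "w \<in> V" "w \<noteq> x" "e = {x, w}" using assms(1,2) by (rule edge_other_end)
  show ?thesis
  proof (cases "splits X w")
    case True
    then show ?thesis
      using four_le_mismatch[OF three_le_n assms(3) True] mismatch_le_cut_over_edge[of x w X] assms(1) w(3)
      by simp
  next
    case False
    have "{i. i < n \<and> ((x, i) \<in> X) \<noteq> ((w, 0) \<in> X)} \<noteq> {}"
      using assms(3) by (auto simp: nonconst_def)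
    then have "1 \<le> card {i. i < n \<and> ((x, i) \<in> X) \<noteq> ((w, 0) \<in> X)}"
      by (simp add: Suc_le_eq card_gt_0_iff)
    moreover have "3 * card {i. i < n \<and> ((x, i) \<in> X) \<noteq> ((w, 0) \<in> X)} \<le> card (cut_over X e)"
      unfolding w(3) using assms(1)[unfolded w(3)] not_splits_const[OF False] by (rule cut_over_edge_const)
    ultimately show ?thesis by linarith
  qed
qed

lemma four_le_cut_over_edge:
  "{u, v} \<in> E \<Longrightarrow> splits X u \<Longrightarrow> splits X v \<Longrightarrow> 4 \<le> card (cut_over X {u, v})"
  using four_le_mismatch[OF three_le_n] mismatch_le_cut_over_edge order_trans by blast

definition cut_no_isolated :: "('a \<times> nat) set \<Rightarrow> bool" where
  "cut_no_isolated X \<longleftrightarrow> (\<forall>p\<in>VP. \<exists>q. prod_adj p q \<and> (q \<in> X \<longleftrightarrow> p \<in> X))"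

lemma cut_no_isolated_Diff_VP: "cut_no_isolated X \<Longrightarrow> cut_no_isolated (VP - X)"
  unfolding cut_no_isolated_def using prod_adj_VP by blast

lemma restricted_edge_cut_cutI:
  assumes X: "X \<subseteq> VP" "a \<in> X" "b \<in> VP" "b \<notin> X" and iso: "cut_no_isolated X"
  shows "restricted_edge_cut VP EP (cut X)"
proof -
  have "\<not> reachable (EP - cut X) a b"
  proof
    assume "reachable (EP - cut X) a b"
    then have "b \<in> X"
      unfolding reachable_def
    proof (rule rtrancl_edge_rel_closed)
      fix p q assume pq: "p \<in> X" "{p, q} \<in> EP - cut X"
      then have "prod_adj p q" by (simp add: prod_edge_iff)
      then show "q \<in> X" using doubleton_in_cut[of p q X] pq by auto
    qed (use X in simp)
    then show False using X by simp
  qed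
  then have "\<not> connected VP (EP - cut X)" using X unfolding connected_def by blast
  moreover have "\<exists>q\<in>VP. q \<noteq> p \<and> reachable (EP - cut X) p q" if "p \<in> VP" for p
  proof -
    have "\<exists>q. prod_adj p q \<and> (q \<in> X \<longleftrightarrow> p \<in> X)"
      using iso that by (simp add: cut_no_isolated_def)
    then obtain q where q: "prod_adj p q" "q \<in> X \<longleftrightarrow> p \<in> X" by blast
    have "{p, q} \<notin> cut X"
    proof
      assume "{p, q} \<in> cut X"
      then obtain p' q' where "p' \<in> X" "q' \<notin> X" "{p, q} = {p', q'}" by (auto simp: cut_def)
      then show False using q(2) by (auto simp: doubleton_eq_iff)
    qed
    then have "(p, q) \<in> edge_rel (EP - cut X)" using q(1) prod_edge_iff by (simp add: edge_rel_def)
    then have "reachable (EP - cut X) p q" by (simp add: reachable_def)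
    moreover have "q \<in> VP" "q \<noteq> p" using prod_adj_VP[OF q(1)] prod_adj_neq[OF q(1)] by auto
    ultimately show ?thesis by blast
  qed
  moreover have "cut X \<subseteq> EP" by (auto simp: cut_def)
  ultimately show ?thesis unfolding restricted_edge_cut_def by blast
qed

lemma restricted_edge_cut_component:
  assumes "restricted_edge_cut VP EP S" "V \<noteq> {}"
  obtains X a b where "X \<subseteq> VP" "a \<in> X" "b \<in> VP" "b \<notin> X" "cut X \<subseteq> S" "cut_no_isolated X"
proof -
  have S: "S \<subseteq> EP" "\<not> connected VP (EP - S)"
    and nontriv: "\<And>p. p \<in> VP \<Longrightarrow> \<exists>q\<in>VP. q \<noteq> p \<and> reachable (EP - S) p q"
    using assms by (auto simp: restricted_edge_cut_def)
  have "VP \<noteq> {}" using assms(2) three_le_n by (auto simp: sp_verts_def cycle_verts_def)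
  then obtain a b where ab: "a \<in> VP" "b \<in> VP" "\<not> reachable (EP - S) a b"
    using S(2) by (auto simp: connected_def)
  define X where "X = {q \<in> VP. reachable (EP - S) a q}"
  have aX: "a \<in> X" using ab(1) by (simp add: X_def reachable_def)
  have closed: "q \<in> X" if "p \<in> X" "{p, q} \<in> EP - S" for p q
  proof -
    have "q \<in> VP" using that(2) prod_edge_iff prod_adj_VP by blast
    moreover have "reachable (EP - S) a q"
      using that reachable_step[of "EP - S" a p q] unfolding X_def by blast
    ultimately show ?thesis by (simp add: X_def)
  qed
  have "cut X \<subseteq> S"
  proof
    fix c assume "c \<in> cut X"
    then obtain p q where "c \<in> EP" "p \<in> X" "q \<notin> X" "c = {p, q}" by (auto simp: cut_def)
    then show "c \<in> S" using closed by blast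
  qed
  moreover have "cut_no_isolated X"
    unfolding cut_no_isolated_def
  proof
    fix p assume "p \<in> VP"
    then obtain v where "v \<noteq> p" "(p, v) \<in> (edge_rel (EP - S))\<^sup>*"
      using nontriv unfolding reachable_def by blast
    then obtain q where "(p, q) \<in> edge_rel (EP - S)" by (metis converse_rtranclE)
    then have pq: "{p, q} \<in> EP - S" "{q, p} \<in> EP - S" by (simp_all add: edge_rel_def insert_commute)
    then have "q \<in> X \<longleftrightarrow> p \<in> X" using closed by blast
    then show "\<exists>q. prod_adj p q \<and> (q \<in> X \<longleftrightarrow> p \<in> X)" using pq prod_edge_iff by blast
  qed
  moreover have "X \<subseteq> VP" "b \<notin> X" using ab by (auto simp: X_def)
  ultimately show thesis using that aX ab(2) by blast
qed

subsection \<open>Upper bounds\<close>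

lemma cut_no_isolated_fibres: "cut_no_isolated (A \<times> {..<n})"
  unfolding cut_no_isolated_def
proof
  fix p assume "p \<in> VP"
  then obtain w i where "p = (w, i)" "w \<in> V" "i < n" by (cases p) auto
  then show "\<exists>q. prod_adj p q \<and> (q \<in> A \<times> {..<n} \<longleftrightarrow> p \<in> A \<times> {..<n})"
    using cyc_adj_Suc three_le_n by (intro exI[of _ "(w, Suc i mod n)"]) simp
qed

lemma card_cut_fibres_le: "card (cut (A \<times> {..<n})) \<le> 3 * n * card (boundary A)"
proof -
  have "cut (A \<times> {..<n}) \<subseteq> (\<Union>e\<in>boundary A. {c \<in> EP. fst ` c = e})"
  proof
    fix c assume "c \<in> cut (A \<times> {..<n})"
    then obtain u i w j where c: "c = {(u, i), (w, j)}" "{(u, i), (w, j)} \<in> EP" "u \<in> A" "w \<notin> A"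
      by (auto simp: cut_def)
    then have "prod_adj (u, i) (w, j)" "u \<noteq> w" using prod_edge_iff by auto
    then have "{u, w} \<in> boundary A" using c(3,4) unfolding boundary_def by auto
    moreover have "fst ` c = {u, w}" using c(1) by simp
    ultimately show "c \<in> (\<Union>e\<in>boundary A. {c \<in> EP. fst ` c = e})" using c(1,2) by blast
  qed
  then have "card (cut (A \<times> {..<n})) \<le> card (\<Union>e\<in>boundary A. {c \<in> EP. fst ` c = e})"
    using finite_boundary finite_EP by (intro card_mono) auto
  also have "\<dots> \<le> (\<Sum>e\<in>boundary A. card {c \<in> EP. fst ` c = e})"
    using finite_boundary by (rule card_UN_le)
  also have "\<dots> \<le> card (boundary A) * (3 * n)"
  proof -
    have "card {c \<in> EP. fst ` c = e} \<le> 3 * n" if e: "e \<in> boundary A" for e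
    proof -
      obtain u w where "e = {u, w}" "u \<noteq> w" using e by (auto simp: boundary_def)
      then show ?thesis using card_edges_over_le by simp
    qed
    then show ?thesis using sum_bounded_above[of "boundary A" _ "3 * n"] by simp
  qed
  finally show ?thesis by (simp add: mult.commute)
qed

lemma restricted_edge_cut_le_edge_conn:
  assumes "u \<in> V" "v \<in> V" "u \<noteq> v"
  obtains S where "restricted_edge_cut VP EP S" "card S \<le> 3 * n * edge_conn V E"
proof -
  obtain A a b where A: "A \<subseteq> V" "a \<in> A" "b \<in> V" "b \<notin> A" "card (boundary A) \<le> edge_conn V E"
    using min_edge_cut_boundary[OF assms] .
  have "restricted_edge_cut VP EP (cut (A \<times> {..<n}))"
    using A three_le_n cut_no_isolated_fibres
    by (intro restricted_edge_cut_cutI[of _ "(a, 0)" "(b, 0)"]) auto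
  moreover have "card (cut (A \<times> {..<n})) \<le> 3 * n * edge_conn V E"
    using card_cut_fibres_le[of A] A(5) by (meson le_trans mult_le_mono2)
  ultimately show thesis by (rule that)
qed

lemma cut_no_isolated_fibre_pair:
  assumes "{x, z} \<in> E" shows "cut_no_isolated {(x, 0), (x, 1)}"
  unfolding cut_no_isolated_def
proof
  have n: "Suc 0 mod n = 1" using three_le_n by simp
  have xz: "x \<in> V" "z \<in> V" "z \<noteq> x" using assms edge_vertices singleton_notin_edges by auto
  fix p assume "p \<in> VP"
  then obtain w i where p: "p = (w, i)" "w \<in> V" "i < n" by (cases p) auto
  consider "w = x" "i < 2" | "w = x" "2 \<le> i" | "w \<noteq> x" by linarith
  then show "\<exists>q. prod_adj p q \<and> (q \<in> {(x, 0), (x, 1)} \<longleftrightarrow> p \<in> {(x, 0), (x, 1)})"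
  proof cases
    case 1
    then have "prod_adj p (x, 1 - i)" using p n three_le_n by (auto simp: cyc_adj_def less_2_cases_iff)
    then show ?thesis using 1 p by (intro exI[of _ "(x, 1 - i)"]) auto
  next
    case 2
    then have "prod_adj p (z, i)" using p xz assms by auto
    then show ?thesis using 2 p xz by (intro exI[of _ "(z, i)"]) auto
  next
    case 3
    then have "prod_adj p (w, Suc i mod n)" using p cyc_adj_Suc three_le_n by simp
    then show ?thesis using 3 p by (intro exI[of _ "(w, Suc i mod n)"]) auto
  qed
qed

text \<open>Both vertices have degree \<open>3 deg(x) + 2\<close> in \<open>G \<boxtimes> C\<^sub>n\<close>, and the edge joining them is
  not cut.\<close>
lemma card_cut_fibre_pair_le:
  assumes "x \<in> V" shows "card (cut {(x, 0), (x, 1)}) \<le> 6 * degree E x + 2"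
proof -
  define A0 where "A0 = {c \<in> EP. (x, 0) \<in> c}"
  define A1 where "A1 = {c \<in> EP. (x, 1) \<in> c}"
  have fin: "finite A0" "finite A1" using finite_EP by (simp_all add: A0_def A1_def)
  have "prod_adj (x, 0) (x, 1)" using assms three_le_n by (simp add: cyc_adj_def)
  then have e01: "{(x, 0), (x, 1)} \<in> A0 \<inter> A1" by (simp add: prod_edge_iff A0_def A1_def)
  have "cut {(x, 0), (x, 1)} \<subseteq> (A0 \<union> A1) - {{(x, 0), (x, 1)}}"
  proof
    fix c assume "c \<in> cut {(x, 0), (x, 1)}"
    then obtain p q where c: "c \<in> EP" "p \<in> {(x, 0), (x, 1)}" "q \<notin> {(x, 0), (x, 1)}" "c = {p, q}"
      by (auto simp: cut_def)
    then have "c \<noteq> {(x, 0), (x, 1)}" by auto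
    moreover have "c \<in> A0 \<union> A1" using c by (auto simp: A0_def A1_def)
    ultimately show "c \<in> (A0 \<union> A1) - {{(x, 0), (x, 1)}}" by simp
  qed
  then have "card (cut {(x, 0), (x, 1)}) \<le> card ((A0 \<union> A1) - {{(x, 0), (x, 1)}})"
    using fin by (intro card_mono) auto
  also have "\<dots> = card (A0 \<union> A1) - 1" using fin e01 by (simp add: card_Diff_singleton)
  also have "card (A0 \<union> A1) + card (A0 \<inter> A1) = card A0 + card A1" using fin by (rule card_Un_Int[symmetric])
  moreover have "1 \<le> card (A0 \<inter> A1)" using e01 fin by (auto simp: Suc_le_eq card_gt_0_iff)
  moreover have "card A0 \<le> 3 * degree E x + 2" "card A1 \<le> 3 * degree E x + 2"
    unfolding A0_def A1_def using card_edges_at_le[OF assms] three_le_n by simp_all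
  ultimately show ?thesis by linarith
qed

lemma restricted_edge_cut_le_min_degree:
  assumes "connected V E" "u \<in> V" "v \<in> V" "u \<noteq> v"
  obtains S where "restricted_edge_cut VP EP S" "card S \<le> 6 * min_degree V E + 2"
proof -
  obtain x where x: "x \<in> V" "degree E x = min_degree V E"
    using min_degree_attained assms(2) by blast
  obtain y where y: "y \<in> V" "y \<noteq> x" using assms(2-4) by metis
  have "(x, y) \<in> (edge_rel E)\<^sup>*" using assms(1) x y by (auto simp: connected_def reachable_def)
  then obtain z where "(x, z) \<in> edge_rel E" using y(2) by (metis converse_rtranclE)
  then have "cut_no_isolated {(x, 0), (x, 1)}"
    by (intro cut_no_isolated_fibre_pair) (simp add: edge_rel_def)
  then have "restricted_edge_cut VP EP (cut {(x, 0), (x, 1)})"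
    using x three_le_n by (intro restricted_edge_cut_cutI[of _ "(x, 0)" "(x, 2)"]) auto
  moreover have "card (cut {(x, 0), (x, 1)}) \<le> 6 * min_degree V E + 2"
    using card_cut_fibre_pair_le[OF x(1)] x(2) by simp
  ultimately show thesis by (rule that)
qed

subsection \<open>Lower bounds\<close>

lemma card_cut_ge_no_split:
  assumes X: "X \<subseteq> VP" "a \<in> X" "b \<in> VP" "b \<notin> X"
    and nosplit: "\<And>w. w \<in> V \<Longrightarrow> \<not> splits X w"
  shows "3 * n * edge_conn V E \<le> card (cut X)"
proof -
  obtain x i y j where ab: "a = (x, i)" "b = (y, j)" by fastforce
  define T where "T = {w \<in> V. (w, 0) \<in> X}"
  have fibre: "(w, k) \<in> X \<longleftrightarrow> w \<in> T" if "w \<in> V" "k < n" for w k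
    using not_splits_const[OF nosplit[OF that(1)] that(2)] that(1) by (simp add: T_def)
  have "x \<in> T" "y \<in> V" "y \<notin> T" using X fibre unfolding ab by auto
  then have "edge_conn V E \<le> card (boundary T)"
    by (intro edge_conn_le_card_boundary[of T x y]) (auto simp: T_def)
  then have "3 * n * edge_conn V E \<le> 3 * n * card (boundary T)" by simp
  moreover have "3 * n \<le> card (cut_over X e)" if e: "e \<in> boundary T" for e
  proof -
    obtain u v where uv: "e = {u, v}" "{u, v} \<in> E" "u \<in> T" "v \<in> V" "v \<notin> T"
      using e by (auto simp: boundary_def)
    have "\<And>k. k < n \<Longrightarrow> (v, k) \<notin> X" using fibre uv(4,5) by blast
    then have "3 * card {k. k < n \<and> (u, k) \<in> X} \<le> card (cut_over X e)"
      unfolding uv(1) by (rule cut_over_edge_empty[OF uv(2)])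
    moreover have "{k. k < n \<and> (u, k) \<in> X} = {..<n}" using fibre uv(3) by (auto simp: T_def)
    ultimately show ?thesis by simp
  qed
  then have "3 * n * card (boundary T) \<le> (\<Sum>e\<in>boundary T. card (cut_over X e))"
    using sum_bounded_below[of "boundary T" "3 * n"] by (simp add: mult.commute)
  also have "\<dots> \<le> card (cut X)" using finite_boundary by (rule sum_card_cut_over_le)
  finally show ?thesis using \<open>3 * n * edge_conn V E \<le> _\<close> by linarith
qed

lemma card_cut_ge_two_splits:
  assumes xy: "x \<in> V" "y \<in> V" "x \<noteq> y" and split: "splits X x" "splits X y"
  shows "6 * min_degree V E + 2 \<le> card (cut X)"
proof -
  define Ex where "Ex = {e \<in> E. x \<in> e}"
  define Ey where "Ey = {e \<in> E. y \<in> e}"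
  let ?c = "\<lambda>s. card (cut_over X s)"
  have fin: "finite Ex" "finite Ey" using finite_edges by (simp_all add: Ex_def Ey_def)
  have xy_edge: "e = {x, y}" if "e \<in> Ex \<inter> Ey" for e
    using that edge_eq_doubleton[of e x y] xy(3) by (simp add: Ex_def Ey_def)
  then have "card (Ex \<inter> Ey) \<le> card {{x, y}}" by (intro card_mono) auto
  then have common: "card (Ex \<inter> Ey) \<le> 1" by simp
  have "3 \<le> ?c e" if "e \<in> Ex \<union> Ey" for e
    using that three_le_cut_over_edge split by (auto simp: Ex_def Ey_def)
  then have "card ((Ex \<union> Ey) - (Ex \<inter> Ey)) * 3 \<le> (\<Sum>e\<in>(Ex \<union> Ey) - (Ex \<inter> Ey). ?c e)"
    using sum_bounded_below[of "(Ex \<union> Ey) - (Ex \<inter> Ey)" 3 ?c] by simp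
  moreover have "4 \<le> ?c e" if "e \<in> Ex \<inter> Ey" for e
    using that xy_edge[OF that] four_le_cut_over_edge split by (simp add: Ex_def)
  then have "card (Ex \<inter> Ey) * 4 \<le> (\<Sum>e\<in>Ex \<inter> Ey. ?c e)"
    using sum_bounded_below[of "Ex \<inter> Ey" 4 ?c] by simp
  moreover have "(\<Sum>e\<in>Ex \<union> Ey. ?c e) = (\<Sum>e\<in>(Ex \<union> Ey) - (Ex \<inter> Ey). ?c e) + (\<Sum>e\<in>Ex \<inter> Ey. ?c e)"
    using fin by (intro sum.subset_diff) auto
  moreover have "card ((Ex \<union> Ey) - (Ex \<inter> Ey)) + card (Ex \<inter> Ey) = card (Ex \<union> Ey)"
    using fin by (subst card_Un_disjoint[symmetric]) (auto intro: arg_cong[where f = card])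
  moreover have "card Ex + card Ey = card (Ex \<union> Ey) + card (Ex \<inter> Ey)"
    using fin by (rule card_Un_Int)
  \<comment> \<open>The edge \<open>xy\<close>, if present, is counted twice but carries four cut edges.\<close>
  ultimately have edges: "3 * (card Ex + card Ey) \<le> (\<Sum>e\<in>Ex \<union> Ey. ?c e) + 2 * card (Ex \<inter> Ey)"
    by simp
  have "?c {x} + ?c {y} + (\<Sum>e\<in>Ex \<union> Ey. ?c e) = (\<Sum>s\<in>{{x}, {y}} \<union> (Ex \<union> Ey). ?c s)"
    using fin xy(3) singleton_notin_edges by (subst sum.union_disjoint) (auto simp: Ex_def Ey_def)
  also have "\<dots> \<le> card (cut X)" using fin by (intro sum_card_cut_over_le) simp
  finally have "?c {x} + ?c {y} + (\<Sum>e\<in>Ex \<union> Ey. ?c e) \<le> card (cut X)" .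
  moreover have "2 \<le> ?c {x}" "2 \<le> ?c {y}" using two_le_cut_over_vertex xy split by auto
  moreover have "min_degree V E \<le> card Ex" "min_degree V E \<le> card Ey"
    using min_degree_le xy by (simp_all add: Ex_def Ey_def degree_def)
  ultimately show ?thesis using edges common by simp
qed

end

text \<open>The arithmetic of the case of a single split vertex \<open>x\<close>: \<open>p\<close> and \<open>q\<close> are the numbers of
  vertices of the fibre of \<open>x\<close> inside and outside \<open>X\<close>; \<open>a\<close>, \<open>b\<close> and \<open>f\<close> count the edges of \<open>G\<close>
  from \<open>x\<close> to fibres inside \<open>X\<close>, from \<open>x\<close> to fibres outside \<open>X\<close>, and between the two kinds of fibres.\<close>
lemma one_split_arith:
  fixes n f a b p q d l C :: nat
  assumes count: "2 + 3 * n * f + 3 * q * a + 3 * p * b \<le> C"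
    and n: "p + q = n" and p: "1 \<le> p" and q: "2 \<le> q" and d: "d \<le> a + b"
    and a: "p = 1 \<Longrightarrow> 1 \<le> a"
    and la: "1 \<le> a \<Longrightarrow> l \<le> f + a" and lb: "1 \<le> b \<Longrightarrow> l \<le> f + b"
  shows "min (3 * n * l) (6 * d + 2) \<le> C"
proof (cases "p = 1")
  case False
  then have "6 * a \<le> 3 * q * a" "6 * b \<le> 3 * p * b" using p q by (simp_all add: mult_le_mono1)
  then have "6 * d + 2 \<le> C" using count d by linarith
  then show ?thesis by simp
next
  case True
  then have n_eq: "n = q + 1" using n by simp
  show ?thesis
  proof (cases "b = 0")
    case True
    have "6 * a \<le> 3 * q * a" using q by (simp add: mult_le_mono1)
    then have "6 * d + 2 \<le> C" using count d True by linarith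
    then show ?thesis by simp
  next
    case False
    have "n * l \<le> n * f + q * a + b"
    proof (cases "a \<le> b")
      case True
      have "n * l \<le> n * (f + a)" using la a \<open>p = 1\<close> by simp
      also have "\<dots> = n * f + q * a + a" by (simp add: n_eq algebra_simps)
      finally show ?thesis using True by simp
    next
      case False
      have "n * l \<le> n * (f + b)" using lb \<open>b \<noteq> 0\<close> by simp
      also have "\<dots> = n * f + q * b + b" by (simp add: n_eq algebra_simps)
      also have "q * b \<le> q * a" using False by simp
      finally show ?thesis by simp
    qed
    moreover have "3 * p * b = 3 * b" using \<open>p = 1\<close> by simp
    ultimately have "3 * n * l \<le> C" using count by linarith
    then show ?thesis by simp
  qed
qed

locale unique_split = cycle_strong_product +
  fixes X :: "('a \<times> nat) set" and x :: 'a
  assumes x_in_V: "x \<in> V" and splits_x: "splits X x"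
    and others_not_split: "\<And>y. y \<in> V \<Longrightarrow> y \<noteq> x \<Longrightarrow> \<not> splits X y"
begin

text \<open>The fibres of vertices other than \<open>x\<close> are not split, so \<open>(w, 0)\<close> decides on which side of
  \<open>X\<close> the whole fibre of \<open>w\<close> lies.\<close>
definition inside :: "'a set" where
  "inside = {w \<in> V - {x}. (w, 0) \<in> X}"

definition outside :: "'a set" where
  "outside = {w \<in> V - {x}. (w, 0) \<notin> X}"

definition E_in :: "'a set set" where
  "E_in = {e \<in> E. \<exists>w\<in>inside. e = {x, w}}"

definition E_out :: "'a set set" where
  "E_out = {e \<in> E. \<exists>w\<in>outside. e = {x, w}}"

definition E_across :: "'a set set" where
  "E_across = {e \<in> E. \<exists>u\<in>inside. \<exists>v\<in>outside. e = {u, v}}"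

lemma fibre_inside: "w \<in> inside \<Longrightarrow> i < n \<Longrightarrow> (w, i) \<in> X"
  using not_splits_const[OF others_not_split, of w i] by (simp add: inside_def)

lemma fibre_outside: "w \<in> outside \<Longrightarrow> i < n \<Longrightarrow> (w, i) \<notin> X"
  using not_splits_const[OF others_not_split, of w i] by (simp add: outside_def)

lemma vertex_cases: "w \<in> V \<Longrightarrow> w \<noteq> x \<Longrightarrow> w \<in> inside \<or> w \<in> outside"
  by (auto simp: inside_def outside_def)

lemma x_notin_inside_outside: "x \<notin> inside" "x \<notin> outside"
  by (simp_all add: inside_def outside_def)

lemma finite_E_parts: "finite E_in" "finite E_out" "finite E_across"
  using finite_edges by (simp_all add: E_in_def E_out_def E_across_def)

lemma min_degree_le_E_in_E_out: "min_degree V E \<le> card E_in + card E_out"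
proof -
  have "{e \<in> E. x \<in> e} \<subseteq> E_in \<union> E_out"
  proof
    fix e assume "e \<in> {e \<in> E. x \<in> e}"
    then obtain w where "e \<in> E" "w \<in> V" "w \<noteq> x" "e = {x, w}" by (auto elim: edge_other_end)
    then show "e \<in> E_in \<union> E_out" using vertex_cases by (auto simp: E_in_def E_out_def)
  qed
  then have "card {e \<in> E. x \<in> e} \<le> card (E_in \<union> E_out)"
    using finite_E_parts by (intro card_mono) auto
  also have "\<dots> \<le> card E_in + card E_out" by (rule card_Un_le)
  finally have "card {e \<in> E. x \<in> e} \<le> card E_in + card E_out" .
  then show ?thesis using min_degree_le[OF x_in_V] by (simp add: degree_def)
qed

lemma edge_conn_le_E_in:
  assumes "E_in \<noteq> {}" shows "edge_conn V E \<le> card E_across + card E_in"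
proof -
  obtain w where w: "w \<in> inside" using assms by (auto simp: E_in_def)
  have "boundary inside \<subseteq> E_across \<union> E_in"
  proof
    fix e assume "e \<in> boundary inside"
    then obtain u v where "e \<in> E" "u \<in> inside" "v \<in> V" "v \<notin> inside" "e = {u, v}"
      by (auto simp: boundary_def)
    then show "e \<in> E_across \<union> E_in"
      using vertex_cases[of v] by (cases "v = x") (auto simp: E_across_def E_in_def insert_commute)
  qed
  then have "card (boundary inside) \<le> card (E_across \<union> E_in)"
    using finite_E_parts by (intro card_mono) auto
  also have "\<dots> \<le> card E_across + card E_in" by (rule card_Un_le)
  finally have "card (boundary inside) \<le> card E_across + card E_in" .
  moreover have "edge_conn V E \<le> card (boundary inside)"
    using w x_in_V x_notin_inside_outside by (intro edge_conn_le_card_boundary) (auto simp: inside_def)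
  ultimately show ?thesis by linarith
qed

lemma edge_conn_le_E_out:
  assumes "E_out \<noteq> {}" shows "edge_conn V E \<le> card E_across + card E_out"
proof -
  obtain w where w: "w \<in> outside" using assms by (auto simp: E_out_def)
  have "boundary (insert x inside) \<subseteq> E_across \<union> E_out"
  proof
    fix e assume "e \<in> boundary (insert x inside)"
    then obtain u v where "e \<in> E" "u \<in> insert x inside" "v \<in> V" "v \<notin> insert x inside" "e = {u, v}"
      by (auto simp: boundary_def)
    then show "e \<in> E_across \<union> E_out"
      using vertex_cases[of v] by (cases "u = x") (auto simp: E_across_def E_out_def)
  qed
  then have "card (boundary (insert x inside)) \<le> card (E_across \<union> E_out)"
    using finite_E_parts by (intro card_mono) auto
  also have "\<dots> \<le> card E_across + card E_out" by (rule card_Un_le)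
  finally have "card (boundary (insert x inside)) \<le> card E_across + card E_out" .
  moreover have "edge_conn V E \<le> card (boundary (insert x inside))"
    using w x_in_V x_notin_inside_outside by (intro edge_conn_le_card_boundary[of _ x w]) (auto simp: inside_def outside_def)
  ultimately show ?thesis by linarith
qed

lemma card_cut_ge_weighted_edges:
  "2 + 3 * n * card E_across + 3 * card {i. i < n \<and> (x, i) \<notin> X} * card E_in
     + 3 * card {i. i < n \<and> (x, i) \<in> X} * card E_out \<le> card (cut X)"
proof -
  let ?c = "\<lambda>s. card (cut_over X s)"
  have across: "3 * n \<le> ?c e" if e: "e \<in> E_across" for e
  proof -
    obtain u v where uv: "e = {u, v}" "{u, v} \<in> E" "u \<in> inside" "v \<in> outside"
      using e by (auto simp: E_across_def)
    have "{i. i < n \<and> (u, i) \<in> X} = {..<n}" using fibre_inside uv(3) by auto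
    then show ?thesis using cut_over_edge_empty[OF uv(2) fibre_outside[OF uv(4)]] uv(1) by simp
  qed
  have inner: "3 * card {i. i < n \<and> (x, i) \<notin> X} \<le> ?c e" if e: "e \<in> E_in" for e
  proof -
    obtain w where w: "e = {x, w}" "{x, w} \<in> E" "w \<in> inside" using e by (auto simp: E_in_def)
    then show ?thesis using cut_over_edge_full[OF w(2) fibre_inside[OF w(3)]] by simp
  qed
  have outer: "3 * card {i. i < n \<and> (x, i) \<in> X} \<le> ?c e" if e: "e \<in> E_out" for e
  proof -
    obtain w where w: "e = {x, w}" "{x, w} \<in> E" "w \<in> outside" using e by (auto simp: E_out_def)
    then show ?thesis using cut_over_edge_empty[OF w(2) fibre_outside[OF w(3)]] by simp
  qed
  have disj: "E_across \<inter> E_in = {}" "E_across \<inter> E_out = {}" "E_in \<inter> E_out = {}"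
    "{x} \<notin> E_across \<union> E_in \<union> E_out"
    using x_notin_inside_outside singleton_notin_edges
    by (auto simp: E_across_def E_in_def E_out_def inside_def outside_def doubleton_eq_iff)
  have "?c {x} + (\<Sum>e\<in>E_across. ?c e) + (\<Sum>e\<in>E_in. ?c e) + (\<Sum>e\<in>E_out. ?c e)
      = (\<Sum>s\<in>insert {x} (E_across \<union> E_in \<union> E_out). ?c s)"
    using finite_E_parts disj by (simp add: sum.union_disjoint Int_Un_distrib2)
  also have "\<dots> \<le> card (cut X)" using finite_E_parts by (intro sum_card_cut_over_le) simp
  finally have "?c {x} + (\<Sum>e\<in>E_across. ?c e) + (\<Sum>e\<in>E_in. ?c e) + (\<Sum>e\<in>E_out. ?c e)
      \<le> card (cut X)" .
  moreover have "2 \<le> ?c {x}" using two_le_cut_over_vertex x_in_V splits_x by blast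
  moreover have "3 * n * card E_across \<le> (\<Sum>e\<in>E_across. ?c e)"
    using sum_bounded_below[of E_across "3 * n" ?c] across by (simp add: mult_ac)
  moreover have "3 * card {i. i < n \<and> (x, i) \<notin> X} * card E_in \<le> (\<Sum>e\<in>E_in. ?c e)"
    using sum_bounded_below[of E_in "3 * card {i. i < n \<and> (x, i) \<notin> X}" ?c] inner by (simp add: mult_ac)
  moreover have "3 * card {i. i < n \<and> (x, i) \<in> X} * card E_out \<le> (\<Sum>e\<in>E_out. ?c e)"
    using sum_bounded_below[of E_out "3 * card {i. i < n \<and> (x, i) \<in> X}" ?c] outer by (simp add: mult_ac)
  ultimately show ?thesis by linarith
qed

lemma E_in_nonempty:
  assumes "card {i. i < n \<and> (x, i) \<in> X} = 1" "cut_no_isolated X"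
  shows "E_in \<noteq> {}"
proof -
  obtain i where i: "{i. i < n \<and> (x, i) \<in> X} = {i}" using assms(1) by (rule card_1_singletonE)
  then have "(x, i) \<in> VP" "(x, i) \<in> X" using x_in_V by auto
  then obtain q where q: "prod_adj (x, i) q" "q \<in> X"
    using assms(2) unfolding cut_no_isolated_def by blast
  obtain w j where wj: "q = (w, j)" by fastforce
  have "w \<noteq> x"
  proof
    assume "w = x"
    then have "j \<in> {i. i < n \<and> (x, i) \<in> X}" using q wj by auto
    then show False using prod_adj_neq[OF q(1)] i wj \<open>w = x\<close> by auto
  qed
  then have "{x, w} \<in> E" "w \<in> V" "j < n" using q(1) wj by auto
  moreover have "w \<in> inside"
    using vertex_cases[OF \<open>w \<in> V\<close> \<open>w \<noteq> x\<close>] fibre_outside q(2) wj \<open>j < n\<close> by blast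
  ultimately show ?thesis by (auto simp: E_in_def)
qed

lemma card_cut_ge:
  assumes "cut_no_isolated X" "2 \<le> card {i. i < n \<and> (x, i) \<notin> X}"
  shows "min (3 * n * edge_conn V E) (6 * min_degree V E + 2) \<le> card (cut X)"
proof (rule one_split_arith[OF card_cut_ge_weighted_edges card_fibre_in_out _ assms(2)
      min_degree_le_E_in_E_out])
  have "{i. i < n \<and> (x, i) \<in> X} \<noteq> {}" using splits_x unfolding nonconst_def by blast
  then show "1 \<le> card {i. i < n \<and> (x, i) \<in> X}" by (simp add: Suc_le_eq card_gt_0_iff)
  show "1 \<le> card E_in" if "card {i. i < n \<and> (x, i) \<in> X} = 1"
    using E_in_nonempty[OF that assms(1)] finite_E_parts by (simp add: Suc_le_eq card_gt_0_iff)
  show "edge_conn V E \<le> card E_across + card E_in" if "1 \<le> card E_in"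
    using that by (intro edge_conn_le_E_in) auto
  show "edge_conn V E \<le> card E_across + card E_out" if "1 \<le> card E_out"
    using that by (intro edge_conn_le_E_out) auto
qed

end

context cycle_strong_product
begin

lemma card_cut_ge_one_split:
  assumes x: "x \<in> V" "splits X x" and others: "\<And>y. y \<in> V \<Longrightarrow> y \<noteq> x \<Longrightarrow> \<not> splits X y"
    and iso: "cut_no_isolated X"
  shows "min (3 * n * edge_conn V E) (6 * min_degree V E + 2) \<le> card (cut X)"
proof (cases "2 \<le> card {i. i < n \<and> (x, i) \<notin> X}")
  case True
  have "unique_split V E n X x"
    using cycle_strong_product_axioms x others by (simp add: unique_split_def unique_split_axioms_def)
  from unique_split.card_cut_ge[OF this iso True] show ?thesis .
next
  case False
  \<comment> \<open>Then pass to the complement of \<open>X\<close>, which has the same cut.\<close>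
  have splits_Diff: "splits (VP - X) y \<longleftrightarrow> splits X y" if "y \<in> V" for y
    using that by (auto simp: nonconst_def)
  have us: "unique_split V E n (VP - X) x"
    using cycle_strong_product_axioms x others splits_Diff
    by (simp add: unique_split_def unique_split_axioms_def)
  have "{i. i < n \<and> (x, i) \<notin> VP - X} = {i. i < n \<and> (x, i) \<in> X}" using x(1) by auto
  then have two: "2 \<le> card {i. i < n \<and> (x, i) \<notin> VP - X}"
    using card_fibre_in_out[of x X] False three_le_n by simp
  from unique_split.card_cut_ge[OF us cut_no_isolated_Diff_VP[OF iso] two]
  show ?thesis by simp
qed

lemma card_restricted_edge_cut_ge:
  assumes "restricted_edge_cut VP EP S" "V \<noteq> {}"
  shows "min (3 * n * edge_conn V E) (6 * min_degree V E + 2) \<le> card S"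
proof -
  obtain X a b where X: "X \<subseteq> VP" "a \<in> X" "b \<in> VP" "b \<notin> X" "cut X \<subseteq> S" "cut_no_isolated X"
    using restricted_edge_cut_component[OF assms] .
  have "min (3 * n * edge_conn V E) (6 * min_degree V E + 2) \<le> card (cut X)"
  proof (cases "\<exists>x\<in>V. splits X x")
    case False
    then have "3 * n * edge_conn V E \<le> card (cut X)"
      using X by (intro card_cut_ge_no_split[of X a b]) auto
    then show ?thesis by (rule min.coboundedI1)
  next
    case True
    then obtain x where x: "x \<in> V" "splits X x" by blast
    show ?thesis
    proof (cases "\<exists>y\<in>V. y \<noteq> x \<and> splits X y")
      case True
      then obtain y where "y \<in> V" "y \<noteq> x" "splits X y" by blast
      then have "6 * min_degree V E + 2 \<le> card (cut X)"
        using x by (intro card_cut_ge_two_splits[of y x]) auto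
      then show ?thesis by (rule min.coboundedI2)
    next
      case False
      then show ?thesis using card_cut_ge_one_split x X(6) by blast
    qed
  qed
  also have "card (cut X) \<le> card S"
    using X(5) assms(1) finite_EP by (intro card_mono) (auto simp: restricted_edge_cut_def intro: finite_subset)
  finally show ?thesis .
qed

lemma restricted_edge_conn_eq:
  assumes "connected V E" "u \<in> V" "v \<in> V" "u \<noteq> v"
  shows "restricted_edge_conn VP EP = min (3 * n * edge_conn V E) (6 * min_degree V E + 2)"
proof -
  let ?K = "{card S |S. restricted_edge_cut VP EP S}"
  have fin: "finite ?K"
    by (rule finite_subset[of _ "card ` Pow EP"]) (auto simp: restricted_edge_cut_def finite_EP)
  obtain S1 where S1: "restricted_edge_cut VP EP S1" "card S1 \<le> 3 * n * edge_conn V E"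
    using restricted_edge_cut_le_edge_conn[OF assms(2-4)] .
  obtain S2 where S2: "restricted_edge_cut VP EP S2" "card S2 \<le> 6 * min_degree V E + 2"
    using restricted_edge_cut_le_min_degree[OF assms] .
  have "Min ?K \<le> card S1" "Min ?K \<le> card S2" using fin S1(1) S2(1) by (auto intro: Min_le)
  moreover have "min (3 * n * edge_conn V E) (6 * min_degree V E + 2) \<le> Min ?K"
    using fin S1(1) assms(2) card_restricted_edge_cut_ge by (subst Min_ge_iff) auto
  ultimately show ?thesis using S1(2) S2(2) by (simp add: restricted_edge_conn_def)
qed

end

theorem theorem3p4:
  fixes V :: "'a set" and E :: "'a set set" and n :: nat
  assumes "graph V E" and "connected V E" and "card V \<ge> 2" and "n \<ge> 3"
  shows "restricted_edge_conn (sp_verts V (cycle_verts n))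
           (sp_edges V E (cycle_verts n) (cycle_edges n))
         = min (3 * n * edge_conn V E)
               (min (2 * (card V + 2 * card E)) (6 * min_degree V E + 2))"
proof -
  interpret cycle_strong_product V E n using assms(1,4) by unfold_locales
  obtain u v where uv: "u \<in> V" "v \<in> V" "u \<noteq> v"
    using assms(3) card_le_Suc0_iff_eq[OF finite_vertices] by fastforce
  then have "6 * min_degree V E + 2 \<le> 2 * (card V + 2 * card E)" using min_degree_bound by blast
  then show ?thesis using restricted_edge_conn_eq[OF assms(2) uv] by (simp add: min_absorb2)
qed

end
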